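(* Let $T\in\mathcal{T}_{\mathrm{hom}}$ and let $\varphi$ be a continuous $p,q$-invariant graph of $T$ with jumping number $l=m+np$ ($0\le m\le p-1$, $0\le n\le q-1$). Then $m$ and $p$ are relatively prime; equivalently, $l$ and $p$ are relatively prime.
   Context: $\mathbb{T}^1=\mathbb{R}/\mathbb{Z}$, $\mathbb{T}^2=\mathbb{T}^1\times\mathbb{T}^1$, $m$ Lebesgue measure on $\mathbb{T}^1$, $\omega\in[0,1)$ irrational, $\pi:\mathbb{R}^2\to\mathbb{T}^2$ the natural projection. $\mathbb{T}^n_*$ is the set of $n$-tuples of pairwise distinct points of $\mathbb{T}^1$. $\mathcal{T}_{\mathrm{hom}}$: continuous maps $T(\theta,x)=(\theta+\omega,T_\theta(x))$ on $\mathbb{T}^2$, homotopic to the identity, with orientation-preserving homeomorphic fibre maps. A lift of $T$ to $\mathbb{R}^2$ is a continuous $\hat T:\mathbb{R}^2\to\mathbb{R}^2$ with $\pi\circ\hat T=T\circ\pi$. $p,q$-invariant graph: a measurable $\varphi:\mathbb{T}^1\to\mathbb{T}^{pq}_*$, $\theta\mapsto(\varphi^i_j(\theta))_{1\le i\le p,1\le j\le q}$, with point set $\Phi$ satisfying $T_\theta(\Phi_\theta)=\Phi_{\theta+\omega}$ for a.e. $\theta$, which (i) has no measurable $T$-invariant subset with strictly between $0$ and $pq$ points on a.e. fibre, (ii) is the disjoint union of $q$-valued graphs $\Phi^i=\{(\theta,\varphi^i_j(\theta)):j\}$, $i=1,\dots,p$, cyclically permuted by $T$ with period $p$, and (iii)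 no $\Phi^i$ has a measurable subset with strictly between $0$ and $q$ points on a.e. fibre that is invariant under some $T^r$, $r\ge1$. It is continuous if $\varphi$ is continuous as a map into $\mathbb{T}^{pq}_*$; then each $\Phi^i$ is (the point set of) a $q$-curve, i.e. it is $\{(\hat\theta\bmod1,\hat\psi(\hat\theta)\bmod1):\hat\theta\in\mathbb{R}\}$ for a continuous $\hat\psi:\mathbb{R}\to\mathbb{R}$ with $\hat\psi(\hat\theta+q)-\hat\psi(\hat\theta)\in\mathbb{Z}$ constant and $\hat\psi(\hat\theta+l)-\hat\psi(\hat\theta)\notin\mathbb{Z}$ for $1\le l<q$ (such $\hat\psi$ are the lifts of $\Phi^i$, uniquely determined by their value at $0$). Jumping number: label the lifts $\hat x^i_j\in[0,1)$ of the points of $\Phi_0$, where $\hat x^i_1,\dots,\hat x^i_q$ lift the points of $\Phi^i_0$, so that $\hat x^1_1<\hat x^2_1<\dots<\hat x^p_1<\hat x^1_2<\dots<\hat x^p_2<\dots<\hat x^p_q$ (such a labelling exists). Let $\hat\varphi^i_j$ be the lift of $\Phi^i$ with $\hat\varphi^i_j(0)=\hat x^i_j$. There are unique $0\le m\le p-1$, $0\le n\le q-1$ and a lift $\hat T$ of $T$ with $\hat T(\hat\theta,\hat\varphi^1_1(\hat\theta))=(\hat\theta+\omega,\hat\varphi^{1+m}_{1+n}(\hat\theta+\omega))$ for all $\hat\theta\in\mathbb{R}$; then $l:=m+np$ is the jumping number of $\varphi$ with respect to $T$. *)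

theory Defs
  imports "HOL-Analysis.Analysis"
begin

text \<open>A point of T^1 = R/Z is represented by its unique representative
in [0,1); the projection R -> T^1 is frac. Points of T^2 are pairs in [0,1)^2 and
the projection pi : R^2 -> T^2 is tproj. Indices i, j of the paper (1-based) are
0-based here.\<close>

definition tproj :: "real \<times> real \<Rightarrow> real \<times> real" where
  "tproj z = (frac (fst z), frac (snd z))"

text \<open>A map T in T_hom is given by a continuous lift F of its fibre maps:
T(theta,x) = (theta + omega, F theta x) mod 1. F theta is the lift of an
orientation preserving circle homeomorphism (strictly increasing, degree one), and
F is 1-periodic in theta (this is homotopy to the identity).\<close>

definition T_hom_lift :: "(real \<Rightarrow> real \<Rightarrow> real) \<Rightarrow> bool" where
  "T_hom_lift F \<longleftrightarrow>
     continuous_on UNIV (\<lambda>z. F (fst z) (snd z)) \<and>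
     (\<forall>\<theta> x. F (\<theta> + 1) x = F \<theta> x) \<and>
     (\<forall>\<theta> x. F \<theta> (x + 1) = F \<theta> x + 1) \<and>
     (\<forall>\<theta>. strict_mono (F \<theta>))"

definition Tmap :: "real \<Rightarrow> (real \<Rightarrow> real \<Rightarrow> real) \<Rightarrow> real \<times> real \<Rightarrow> real \<times> real" where
  "Tmap \<omega> F z = (frac (fst z + \<omega>), frac (F (fst z) (snd z)))"

definition is_T_lift :: "real \<Rightarrow> (real \<Rightarrow> real \<Rightarrow> real) \<Rightarrow> (real \<times> real \<Rightarrow> real \<times> real) \<Rightarrow> bool" where
  "is_T_lift \<omega> F G \<longleftrightarrow> continuous_on UNIV G \<and> (\<forall>z. tproj (G z) = Tmap \<omega> F (tproj z))"

definition fibre :: "(real \<times> real) set \<Rightarrow> real \<Rightarrow> real set" where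
  "fibre A \<theta> = {x. (\<theta>, x) \<in> A}"

definition qcurve_lift :: "nat \<Rightarrow> (real \<times> real) set \<Rightarrow> (real \<Rightarrow> real) \<Rightarrow> bool" where
  "qcurve_lift q S \<psi> \<longleftrightarrow>
     continuous_on UNIV \<psi> \<and>
     (\<exists>k::int. \<forall>\<theta>. \<psi> (\<theta> + real q) - \<psi> \<theta> = of_int k) \<and>
     (\<forall>l. 1 \<le> l \<and> l < q \<longrightarrow> (\<forall>\<theta>. \<psi> (\<theta> + real l) - \<psi> \<theta> \<notin> \<int>)) \<and>
     S = {(frac \<theta>, frac (\<psi> \<theta>)) | \<theta>. True}"

definition qcurve :: "nat \<Rightarrow> (real \<times> real) set \<Rightarrow> bool" where
  "qcurve q S \<longleftrightarrow> (\<exists>\<psi>. qcurve_lift q S \<psi>)"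

definition fibre_invariant :: "real \<Rightarrow> (real \<Rightarrow> real \<Rightarrow> real) \<Rightarrow> nat \<Rightarrow> (real \<times> real) set \<Rightarrow> bool" where
  "fibre_invariant \<omega> F r A \<longleftrightarrow>
     (AE \<theta> in lborel. \<theta> \<in> {0..<1} \<longrightarrow>
        (\<lambda>x. snd ((Tmap \<omega> F ^^ r) (\<theta>, x))) ` fibre A \<theta> = fibre A (frac (\<theta> + real r * \<omega>)))"

text \<open>Continuous p,q-invariant graph, given by its decomposition into the point sets
Phi 0, ..., Phi (p-1) of the q-valued graphs Phi^1, ..., Phi^p.\<close>
definition cont_pq_invariant_graph ::
  "real \<Rightarrow> (real \<Rightarrow> real \<Rightarrow> real) \<Rightarrow> nat \<Rightarrow> nat \<Rightarrow> (nat \<Rightarrow> (real \<times> real) set) \<Rightarrow> bool" where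
  "cont_pq_invariant_graph \<omega> F p q Phi \<longleftrightarrow>
     1 \<le> p \<and> 1 \<le> q \<and>
     (\<forall>i<p. qcurve q (Phi i)) \<and>
     (\<forall>i<p. \<forall>i'<p. i \<noteq> i' \<longrightarrow> Phi i \<inter> Phi i' = {}) \<and>
     (\<forall>\<theta>\<in>{0..<1}. card (fibre (\<Union>i<p. Phi i) \<theta>) = p * q) \<and>
     fibre_invariant \<omega> F 1 (\<Union>i<p. Phi i) \<and>
     \<comment> \<open>(i)\<close>
     \<not> (\<exists>A. A \<subseteq> (\<Union>i<p. Phi i) \<and> A \<in> sets (borel :: (real \<times> real) measure) \<and>
           fibre_invariant \<omega> F 1 A \<and>
           (AE \<theta> in lborel. \<theta> \<in> {0..<1} \<longrightarrow>
              0 < card (fibre A \<theta>) \<and> card (fibre A \<theta>) < p * q)) \<and>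
     \<comment> \<open>(ii)\<close>
     (\<exists>\<sigma>. bij_betw \<sigma> {..<p} {..<p} \<and>
        (\<forall>i<p. AE \<theta> in lborel. \<theta> \<in> {0..<1} \<longrightarrow>
            (\<lambda>x. snd (Tmap \<omega> F (\<theta>, x))) ` fibre (Phi i) \<theta> = fibre (Phi (\<sigma> i)) (frac (\<theta> + \<omega>))) \<and>
        (\<forall>i<p. {(\<sigma> ^^ k) i | k. k < p} = {..<p})) \<and>
     \<comment> \<open>(iii)\<close>
     (\<forall>i<p. \<not> (\<exists>A r. 1 \<le> r \<and> A \<subseteq> Phi i \<and> A \<in> sets (borel :: (real \<times> real) measure) \<and>
           fibre_invariant \<omega> F r A \<and>
           (AE \<theta> in lborel. \<theta> \<in> {0..<1} \<longrightarrow>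
              0 < card (fibre A \<theta>) \<and> card (fibre A \<theta>) < q)))"

text \<open>(m, n) are the data of the jumping number l = m + n p (0-based indices: the
paper's hat-x^i_j is x (i-1) (j-1) and its Phi^i is Phi (sigma (i-1))).\<close>
definition jumping_data ::
  "real \<Rightarrow> (real \<Rightarrow> real \<Rightarrow> real) \<Rightarrow> nat \<Rightarrow> nat \<Rightarrow> (nat \<Rightarrow> (real \<times> real) set) \<Rightarrow> nat \<Rightarrow> nat \<Rightarrow> bool" where
  "jumping_data \<omega> F p q Phi m n \<longleftrightarrow>
     (\<exists>\<sigma> (x :: nat \<Rightarrow> nat \<Rightarrow> real).
        bij_betw \<sigma> {..<p} {..<p} \<and>
        (\<forall>i<p. \<forall>j<q. 0 \<le> x i j \<and> x i j < 1) \<and>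
        (\<forall>i<p. fibre (Phi (\<sigma> i)) 0 = {x i j | j. j < q}) \<and>
        (\<forall>i<p. \<forall>j<q. \<forall>i'<p. \<forall>j'<q. j * p + i < j' * p + i' \<longrightarrow> x i j < x i' j') \<and>
        m < p \<and> n < q \<and>
        (\<exists>\<psi>0 \<psi>1 G. qcurve_lift q (Phi (\<sigma> 0)) \<psi>0 \<and> \<psi>0 0 = x 0 0 \<and>
           qcurve_lift q (Phi (\<sigma> m)) \<psi>1 \<and> \<psi>1 0 = x m n \<and>
           is_T_lift \<omega> F G \<and>
           (\<forall>\<theta>. G (\<theta>, \<psi>0 \<theta>) = (\<theta> + \<omega>, \<psi>1 (\<theta> + \<omega>)))))"

end

theory Submission
  imports Defs
begin

(* Over each \<theta>, the points of the graph lifted to the real line form a strictly increasing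
   bi-infinite sequence whose labels (the q-curve carrying the point) repeat with period p. Over
   \<theta> = 0 this is the choice of the labelling, and it persists for all \<theta> because two distinct
   continuous lifts never differ by an integer, so they cannot change order. The fibre map F \<theta>
   is strictly increasing and maps the lifted fibre over \<theta> onto the one over \<theta> + \<omega>, so it
   shifts the enumeration by a constant: T acts on the labels as the rotation i \<mapsto> i + m mod p,
   where m is read off from the jumping number. Since T permutes the p curves cyclically, this
   rotation is transitive, which forces m and p to be coprime. *)

lemma frac_eq_iff_diff_Ints: "frac x = frac y \<longleftrightarrow> x - y \<in> \<int>"
  for x y :: real
  by (metis frac_diff_eq frac_diff_zero frac_eq_0_iff)

lemma continuous_not_Ints_floor_const:
  fixes g :: "real \<Rightarrow> real"
  assumes "continuous_on UNIV g" and "\<And>t. g t \<notin> \<int>"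
  shows "\<lfloor>g s\<rfloor> = \<lfloor>g t\<rfloor>"
proof -
  have conn: "connected (range g)"
    using assms(1) connected_UNIV connected_continuous_image by blast
  have "\<lfloor>g b\<rfloor> \<le> \<lfloor>g a\<rfloor>" for a b
  proof (rule ccontr)
    assume "\<not> \<lfloor>g b\<rfloor> \<le> \<lfloor>g a\<rfloor>"
    then have "g a \<le> of_int \<lfloor>g b\<rfloor>"
      by linarith
    then have "of_int \<lfloor>g b\<rfloor> \<in> range g"
      using connectedD_interval[OF conn rangeI[of g a] rangeI[of g b]] by simp
    then show False
      using assms(2) by (metis Ints_of_int rangeE)
  qed
  then show ?thesis
    by (meson order_antisym)
qed

lemma add_one_equivariant_add_of_int:
  fixes f :: "real \<Rightarrow> real"
  assumes "\<And>y. f (y + 1) = f y + 1"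
  shows "f (y + of_int k) = f y + of_int k"
proof (induction k arbitrary: y rule: int_induct[where k = 0])
  case (step1 i)
  then show ?case using assms[of "y + of_int i"] by (simp add: add.assoc)
next
  case (step2 i)
  then show ?case using assms[of "y + of_int (i - 1)"] by (simp add: add.assoc)
qed simp

lemma add_one_equivariant_frac:
  fixes f :: "real \<Rightarrow> real"
  assumes "\<And>y. f (y + 1) = f y + 1"
  shows "frac (f (frac y)) = frac (f y)"
  using add_one_equivariant_add_of_int[of f, OF assms, of "frac y" "\<lfloor>y\<rfloor>"] by (simp add: frac_def)

lemma strict_mono_surj_int_eq_shift:
  fixes g :: "int \<Rightarrow> int"
  assumes "strict_mono g" and "surj g"
  shows "g s = g 0 + s"
proof -
  have step: "g (t + 1) = g t + 1" for t
  proof -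
    obtain u where u: "g u = g t + 1"
      using assms(2) by (metis surjD)
    have "t < u"
      using u assms(1) by (simp add: strict_mono_less[symmetric])
    then have "g (t + 1) \<le> g u"
      using assms(1) by (simp add: strict_mono_less_eq)
    moreover have "g t < g (t + 1)"
      using assms(1) by (simp add: strict_mono_less)
    ultimately show ?thesis
      using u by simp
  qed
  show ?thesis
  proof (induction s rule: int_induct[where k = 0])
    case (step2 i)
    then show ?case using step[of "i - 1"] by simp
  qed (simp_all add: step)
qed

lemma strict_mono_image_enumeration_shift:
  fixes e :: "int \<Rightarrow> 'a::linorder" and e' :: "int \<Rightarrow> 'b::linorder" and f :: "'a \<Rightarrow> 'b::linorder"
  assumes "strict_mono e" "strict_mono e'" "strict_mono f" and "f ` range e = range e'"
  shows "\<exists>c. \<forall>s. f (e s) = e' (s + c)"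
proof -
  have "\<forall>s. \<exists>u. f (e s) = e' u"
    using assms(4) by blast
  then obtain g where g: "\<And>s. f (e s) = e' (g s)"
    by metis
  have "strict_mono g"
  proof (rule strict_monoI)
    fix s t :: int assume "s < t"
    then have "e' (g s) < e' (g t)"
      using assms(1,3) g by (metis strict_mono_less)
    then show "g s < g t"
      using assms(2) by (simp add: strict_mono_less)
  qed
  moreover have "surj g"
  proof (rule surjI[of _ "\<lambda>u. SOME s. f (e s) = e' u"])
    fix u
    have "e' u \<in> f ` range e"
      using assms(4) by simp
    then have "\<exists>s. f (e s) = e' u"
      by auto
    then have "e' (g (SOME s. f (e s) = e' u)) = e' u"
      unfolding g[symmetric] by (rule someI_ex)
    then show "g (SOME s. f (e s) = e' u) = u"
      by (simp add: strict_mono_eq[OF assms(2)])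
  qed
  ultimately have shift: "g s = s + g 0" for s
    using strict_mono_surj_int_eq_shift by (simp add: add.commute)
  show ?thesis
  proof (intro exI allI)
    fix s
    show "f (e s) = e' (s + g 0)"
      using g[of s] shift[of s] by simp
  qed
qed

lemma AE_lborel_obtain_in_unit_interval:
  assumes "AE \<theta> in lborel. \<theta> \<in> {0..<1} \<longrightarrow> P \<theta>"
  obtains \<theta> :: real where "\<theta> \<in> {0..<1}" and "P \<theta>"
proof (rule ccontr)
  assume "\<not> thesis"
  have "AE \<theta> in lborel. \<theta> \<notin> {0..<1::real}"
    using assms by (rule eventually_mono) (use that \<open>\<not> thesis\<close> in blast)
  then have "emeasure lborel {\<theta> \<in> space lborel. \<theta> \<in> {0..<1::real}} = 0"
    by (rule emeasure_eq_0_AE)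
  moreover have "{\<theta> \<in> space lborel. \<theta> \<in> {0..<1::real}} = {0..<1}"
    by auto
  ultimately have "emeasure lborel {0..<1::real} = 0"
    by metis
  then show False
    by simp
qed

lemma funpow_conj_rotation:
  assumes "\<And>i. i < p \<Longrightarrow> \<sigma> (\<tau> i) = \<tau> ((m + i) mod p)" and "i < p"
  shows "(\<sigma> ^^ k) (\<tau> i) = \<tau> ((k * m + i) mod p)"
proof (induction k)
  case (Suc k)
  have "(\<sigma> ^^ Suc k) (\<tau> i) = \<sigma> (\<tau> ((k * m + i) mod p))"
    using Suc by simp
  also have "\<dots> = \<tau> ((m + (k * m + i) mod p) mod p)"
    using assms by simp
  also have "(m + (k * m + i) mod p) mod p = (Suc k * m + i) mod p"
    by (simp add: mod_add_right_eq add.assoc)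
  finally show ?case .
qed (simp add: assms(2))

lemma coprime_if_conj_rotation_transitive:
  fixes m p :: nat
  assumes "0 < p" and \<tau>: "bij_betw \<tau> {..<p} {..<p}"
    and rot: "\<And>i. i < p \<Longrightarrow> \<sigma> (\<tau> i) = \<tau> ((m + i) mod p)"
    and orbit: "{(\<sigma> ^^ k) (\<tau> 0) | k. k < p} = {..<p}"
  shows "coprime m p"
proof (cases "p = 1")
  case False
  with assms(1) have "1 < p"
    by simp
  with \<tau> orbit have "\<tau> 1 \<in> {(\<sigma> ^^ k) (\<tau> 0) | k. k < p}"
    by (auto simp: bij_betw_def)
  then obtain k where "\<tau> 1 = \<tau> ((k * m) mod p)"
    using funpow_conj_rotation[where \<sigma> = \<sigma> and \<tau> = \<tau> and m = m and p = p and i = 0,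
        OF rot assms(1)]
    by auto
  then have "(k * m) mod p = 1"
    using \<tau> \<open>1 < p\<close> by (auto simp: bij_betw_def inj_on_def)
  then have "coprime (k * m) p"
    using assms(1) coprime_mod_left_iff[of p "k * m"] by simp
  then show ?thesis
    by simp
qed simp

lemma periodic_increment_add_multiple:
  fixes \<psi> :: "real \<Rightarrow> real"
  assumes "\<And>t. \<psi> (t + c) - \<psi> t = k"
  shows "\<psi> (v + of_int a * c) = \<psi> v + of_int a * k"
proof (induction a arbitrary: v rule: int_induct[where k = 0])
  case (step1 i)
  have "\<psi> (v + of_int (i + 1) * c) = \<psi> ((v + of_int i * c) + c)"
    by (simp add: algebra_simps)
  also have "\<dots> = \<psi> (v + of_int i * c) + k"
    using assms[of "v + of_int i * c"] by simp
  finally show ?case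
    using step1 by (simp add: algebra_simps)
next
  case (step2 i)
  have "\<psi> (v + of_int i * c) = \<psi> ((v + of_int (i - 1) * c) + c)"
    by (simp add: algebra_simps)
  also have "\<dots> = \<psi> (v + of_int (i - 1) * c) + k"
    using assms[of "v + of_int (i - 1) * c"] by simp
  finally show ?case
    using step2 by (simp add: algebra_simps)
qed simp

lemma qcurve_lift_diff_Ints_iff:
  assumes "qcurve_lift q S \<psi>" and "0 < q"
  shows "\<psi> (v + of_int d) - \<psi> v \<in> \<int> \<longleftrightarrow> int q dvd d"
proof -
  obtain k :: int where k: "\<And>t. \<psi> (t + real q) - \<psi> t = of_int k"
    using assms(1) unfolding qcurve_lift_def by blast
  define a where "a = d div int q"
  define l where "l = nat (d mod int q)"
  have d: "d = a * int q + int l"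
    using assms(2) by (simp add: a_def l_def)
  define w where "w = v + of_int a * real q"
  have diff: "\<psi> (v + of_int d) - \<psi> v = (\<psi> (w + real l) - \<psi> w) + of_int (a * k)"
    using periodic_increment_add_multiple[of \<psi> "real q" "of_int k", OF k, of v a]
    by (simp add: d w_def algebra_simps)
  show ?thesis
  proof (cases "l = 0")
    case True
    then have "int q dvd d"
      by (simp add: d)
    with True diff show ?thesis
      by simp
  next
    case False
    then have "\<not> int q dvd d"
      using assms(2) by (simp add: l_def dvd_eq_mod_eq_0 nat_eq_iff)
    moreover have "l < q"
      using assms(2) by (simp add: l_def nat_less_iff)
    then have "\<psi> (w + real l) - \<psi> w \<notin> \<int>"
      using False assms(1) unfolding qcurve_lift_def by simp
    then have "\<psi> (v + of_int d) - \<psi> v \<notin> \<int>"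
      using diff by (metis Ints_diff Ints_of_int add_diff_cancel_right')
    ultimately show ?thesis
      by simp
  qed
qed

lemma qcurve_lift_mem: "qcurve_lift q S \<psi> \<Longrightarrow> (frac t, frac (\<psi> t)) \<in> S"
  unfolding qcurve_lift_def by blast

lemma qcurve_lift_memE:
  assumes "qcurve_lift q S \<psi>" and "z \<in> S"
  obtains t where "z = (frac t, frac (\<psi> t))"
  using assms unfolding qcurve_lift_def by blast

lemma T_lift_maps_curve_point:
  assumes "is_T_lift \<omega> F G" and "G (\<theta>, \<psi>0 \<theta>) = (\<theta> + \<omega>, \<psi>1 (\<theta> + \<omega>))"
    and "qcurve_lift q S0 \<psi>0" and "qcurve_lift q S1 \<psi>1" and "\<theta> \<in> {0..<1}"
  obtains y where "(\<theta>, y) \<in> S0" and "(frac (\<theta> + \<omega>), frac (F \<theta> y)) \<in> S1"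
proof -
  have "tproj (G (\<theta>, \<psi>0 \<theta>)) = Tmap \<omega> F (tproj (\<theta>, \<psi>0 \<theta>))"
    using assms(1) unfolding is_T_lift_def by blast
  then have "frac (\<psi>1 (\<theta> + \<omega>)) = frac (F \<theta> (frac (\<psi>0 \<theta>)))"
    using assms(2,5) by (simp add: tproj_def Tmap_def)
  then show thesis
    using that qcurve_lift_mem[OF assms(3), of \<theta>] qcurve_lift_mem[OF assms(4), of "\<theta> + \<omega>"] assms(5)
    by simp
qed

locale labelled_qcurves =
  fixes p q :: nat and Phi :: "nat \<Rightarrow> (real \<times> real) set" and \<tau> :: "nat \<Rightarrow> nat"
    and x :: "nat \<Rightarrow> nat \<Rightarrow> real"
  assumes p_pos: "0 < p" and q_pos: "0 < q"
    and qcurve_Phi: "\<And>i. i < p \<Longrightarrow> qcurve q (Phi i)"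
    and Phi_disjoint: "\<And>i i'. i < p \<Longrightarrow> i' < p \<Longrightarrow> i \<noteq> i' \<Longrightarrow> Phi i \<inter> Phi i' = {}"
    and bij_\<tau>: "bij_betw \<tau> {..<p} {..<p}"
    and x_range: "\<And>i j. i < p \<Longrightarrow> j < q \<Longrightarrow> x i j \<in> {0..<1}"
    and fibre_Phi_0: "\<And>i. i < p \<Longrightarrow> fibre (Phi (\<tau> i)) 0 = {x i j | j. j < q}"
    and x_ordered: "\<And>i j i' j'. i < p \<Longrightarrow> j < q \<Longrightarrow> i' < p \<Longrightarrow> j' < q \<Longrightarrow>
      j * p + i < j' * p + i' \<Longrightarrow> x i j < x i' j'"
begin

lemma \<tau>_less: "i < p \<Longrightarrow> \<tau> i < p"
  using bij_\<tau> by (auto simp: bij_betw_def)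

lemma \<tau>_eq_iff: "i < p \<Longrightarrow> i' < p \<Longrightarrow> \<tau> i = \<tau> i' \<longleftrightarrow> i = i'"
  using bij_\<tau> by (auto simp: bij_betw_def inj_on_def)

lemma Phi_unique:
  assumes "i < p" "i' < p" "z \<in> Phi i" "z \<in> Phi i'"
  shows "i = i'"
  using Phi_disjoint assms by blast

lemma Phi_frac:
  assumes "i < p" and "(\<theta>, y) \<in> Phi i"
  shows "frac y = y"
proof -
  obtain \<psi> where "qcurve_lift q (Phi i) \<psi>"
    using qcurve_Phi[OF assms(1)] unfolding qcurve_def by blast
  then show ?thesis
    using assms(2) by (rule qcurve_lift_memE) simp
qed

lemma index_split:
  assumes "r < p * q"
  shows "r mod p < p" and "r div p < q" and "r div p * p + r mod p = r"
proof -
  show "r mod p < p" and "r div p * p + r mod p = r"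
    using p_pos by simp_all
  show "r div p < q"
    using assms less_mult_imp_div_less[of r q p] by (simp add: mult.commute)
qed

lemma index_combine:
  assumes "i < p" and "j < q"
  shows "j * p + i < p * q" and "(j * p + i) mod p = i" and "(j * p + i) div p = j"
proof -
  have "j * p + i < (j + 1) * p"
    using assms(1) by simp
  also have "\<dots> \<le> q * p"
    using assms(2) by (intro mult_right_mono) simp_all
  finally show "j * p + i < p * q"
    by (simp add: mult.commute)
  show "(j * p + i) mod p = i" and "(j * p + i) div p = j"
    using assms(1) by simp_all
qed

definition base_point :: "nat \<Rightarrow> real" where
  "base_point r = x (r mod p) (r div p)"

lemma base_point_range: "r < p * q \<Longrightarrow> base_point r \<in> {0..<1}"
  unfolding base_point_def using index_split x_range by blast

lemma base_point_strict_mono: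
  assumes "r < r'" and "r' < p * q"
  shows "base_point r < base_point r'"
  unfolding base_point_def
  using x_ordered[of "r mod p" "r div p" "r' mod p" "r' div p"] index_split[of r]
    index_split[of r'] assms
  by simp

lemma mem_Phi_base_point: "r < p * q \<Longrightarrow> (0, base_point r) \<in> Phi (\<tau> (r mod p))"
  using fibre_Phi_0 index_split unfolding base_point_def fibre_def by blast

definition lift :: "nat \<Rightarrow> real \<Rightarrow> real" where
  "lift i = (SOME \<psi>. qcurve_lift q (Phi (\<tau> i)) \<psi>)"

lemma qcurve_lift_lift: "i < p \<Longrightarrow> qcurve_lift q (Phi (\<tau> i)) (lift i)"
  unfolding lift_def using qcurve_Phi[OF \<tau>_less] unfolding qcurve_def by (rule someI_ex)

definition base_param :: "nat \<Rightarrow> int" where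
  "base_param r = (SOME t. frac (lift (r mod p) (of_int t)) = base_point r)"

lemma frac_lift_base_param:
  assumes "r < p * q"
  shows "frac (lift (r mod p) (of_int (base_param r))) = base_point r"
proof -
  obtain t where t: "(0, base_point r) = (frac t, frac (lift (r mod p) t))"
    using qcurve_lift_lift[OF index_split(1)[OF assms]] mem_Phi_base_point[OF assms]
    by (rule qcurve_lift_memE)
  then have "t \<in> \<int>"
    by simp
  then obtain k where "t = of_int k"
    by (rule Ints_cases)
  with t have "\<exists>k::int. frac (lift (r mod p) (of_int k)) = base_point r"
    by auto
  then show ?thesis
    unfolding base_param_def by (rule someI_ex)
qed

lemma lift_base_param_minus_base_point_Ints:
  assumes "r < p * q"
  shows "lift (r mod p) (of_int (base_param r)) - base_point r \<in> \<int>"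
proof -
  have "frac (base_point r) = base_point r"
    using base_point_range[OF assms] by simp
  then show ?thesis
    using frac_lift_base_param[OF assms] by (simp add: frac_eq_iff_diff_Ints[symmetric])
qed

text \<open>The paper's lift of the q-curve through the point x i j over 0, indexed by r = j * p + i.\<close>

definition strand :: "nat \<Rightarrow> real \<Rightarrow> real" where
  "strand r \<theta> =
    lift (r mod p) (\<theta> + of_int (base_param r)) - lift (r mod p) (of_int (base_param r))
    + base_point r"

lemma strand_0 [simp]: "strand r 0 = base_point r"
  by (simp add: strand_def)

lemma continuous_strand:
  assumes "r < p * q"
  shows "continuous_on UNIV (strand r)"
proof -
  have "continuous_on UNIV (lift (r mod p))"
    using qcurve_lift_lift[OF index_split(1)[OF assms]] unfolding qcurve_lift_def by blast
  then have "continuous_on UNIV (\<lambda>\<theta>. lift (r mod p) (\<theta> + of_int (base_param r)))"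
    by (rule continuous_on_compose2) (auto intro: continuous_intros)
  then show ?thesis
    unfolding strand_def by (intro continuous_intros)
qed

lemma frac_strand:
  "r < p * q \<Longrightarrow> frac (strand r \<theta>) = frac (lift (r mod p) (\<theta> + of_int (base_param r)))"
  unfolding strand_def frac_eq_iff_diff_Ints
  using Ints_minus[OF lift_base_param_minus_base_point_Ints] by simp

lemma strand_mem: "r < p * q \<Longrightarrow> (frac \<theta>, frac (strand r \<theta>)) \<in> Phi (\<tau> (r mod p))"
  using qcurve_lift_mem[OF qcurve_lift_lift[OF index_split(1)], of r "\<theta> + of_int (base_param r)"]
  by (simp add: frac_strand)

lemma base_point_eq_iff: "r < p * q \<Longrightarrow> r' < p * q \<Longrightarrow> base_point r = base_point r' \<longleftrightarrow> r = r'"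
  using base_point_strict_mono by (metis less_irrefl linorder_neqE_nat)

lemma base_param_cong_imp_eq:
  assumes "r < p * q" "r' < p * q" and "r mod p = r' mod p"
    and "int q dvd base_param r - base_param r'"
  shows "r = r'"
proof -
  have "lift (r mod p) (of_int (base_param r') + of_int (base_param r - base_param r'))
      - lift (r mod p) (of_int (base_param r')) \<in> \<int>"
    using qcurve_lift_diff_Ints_iff[OF qcurve_lift_lift[OF index_split(1)[OF assms(1)]] q_pos]
      assms(4)
    by blast
  then have "frac (lift (r mod p) (of_int (base_param r)))
      = frac (lift (r' mod p) (of_int (base_param r')))"
    using assms(3) by (simp add: frac_eq_iff_diff_Ints)
  then show ?thesis
    using assms(1,2) by (simp add: frac_lift_base_param base_point_eq_iff)
qed

lemma strand_diff_not_Ints: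
  assumes "r < p * q" "r' < p * q" and "r \<noteq> r'"
  shows "strand r \<theta> - strand r' \<theta> \<notin> \<int>"
proof
  assume "strand r \<theta> - strand r' \<theta> \<in> \<int>"
  then have frac_eq: "frac (strand r \<theta>) = frac (strand r' \<theta>)"
    by (simp add: frac_eq_iff_diff_Ints)
  have "(frac \<theta>, frac (strand r \<theta>)) \<in> Phi (\<tau> (r' mod p))"
    using strand_mem[OF assms(2)] frac_eq by simp
  with strand_mem[OF assms(1)] have "\<tau> (r mod p) = \<tau> (r' mod p)"
    using Phi_unique \<tau>_less index_split(1) assms(1,2) by blast
  then have same_curve: "r mod p = r' mod p"
    using \<tau>_eq_iff index_split(1) assms(1,2) by blast
  have "lift (r mod p) (\<theta> + of_int (base_param r') + of_int (base_param r - base_param r'))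
      - lift (r mod p) (\<theta> + of_int (base_param r')) \<in> \<int>"
    using frac_eq same_curve by (simp add: frac_strand assms(1,2) frac_eq_iff_diff_Ints add.assoc)
  then have "int q dvd base_param r - base_param r'"
    using qcurve_lift_diff_Ints_iff[OF qcurve_lift_lift[OF index_split(1)[OF assms(1)]] q_pos]
    by blast
  then show False
    using base_param_cong_imp_eq assms same_curve by blast
qed

lemma strand_less:
  assumes "r < r'" and "r' < p * q"
  shows "strand r \<theta> < strand r' \<theta>" and "strand r' \<theta> < strand r \<theta> + 1"
proof -
  let ?g = "\<lambda>\<theta>. strand r' \<theta> - strand r \<theta>"
  have not_Ints: "?g t \<notin> \<int>" for t
    using strand_diff_not_Ints assms by simp
  have "\<lfloor>?g \<theta>\<rfloor> = \<lfloor>?g 0\<rfloor>"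
    using assms
    by (intro continuous_not_Ints_floor_const not_Ints continuous_intros continuous_strand) simp_all
  also have "\<lfloor>?g 0\<rfloor> = 0"
    using base_point_strict_mono[OF assms] base_point_range[of r] base_point_range[of r'] assms
    by (simp add: floor_eq_iff)
  finally have "\<lfloor>?g \<theta>\<rfloor> = 0" .
  moreover have "?g \<theta> \<noteq> 0"
    using not_Ints[of \<theta>] by auto
  ultimately show "strand r \<theta> < strand r' \<theta>" and "strand r' \<theta> < strand r \<theta> + 1"
    by (simp_all add: floor_eq_iff)
qed

lemma strand_bounds:
  assumes "r < p * q"
  shows "strand 0 \<theta> \<le> strand r \<theta>" and "strand r \<theta> < strand 0 \<theta> + 1"
proof -
  show "strand 0 \<theta> \<le> strand r \<theta>"
    using strand_less(1)[of 0 r \<theta>] assms by (cases "r = 0") auto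
  show "strand r \<theta> < strand 0 \<theta> + 1"
    using strand_less(2)[of 0 r \<theta>] assms by (cases "r = 0") auto
qed

lemma base_param_residues:
  assumes "i < p"
  obtains j where "j < q" and "int q dvd k - base_param (j * p + i)"
proof -
  define res where "res j = nat (base_param (j * p + i) mod int q)" for j
  have "inj_on res {..<q}"
  proof (rule inj_onI)
    fix j j' assume j: "j \<in> {..<q}" "j' \<in> {..<q}" and "res j = res j'"
    then have "base_param (j * p + i) mod int q = base_param (j' * p + i) mod int q"
      using q_pos by (simp add: res_def eq_nat_nat_iff)
    then have "int q dvd base_param (j * p + i) - base_param (j' * p + i)"
      by (simp add: mod_eq_dvd_iff)
    then have "j * p + i = j' * p + i"
      using base_param_cong_imp_eq[of "j * p + i" "j' * p + i"] index_combine(1,2)[OF assms] j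
      by simp
    then show "j = j'"
      using p_pos by simp
  qed
  moreover have "res ` {..<q} \<subseteq> {..<q}"
    using q_pos by (auto simp: res_def nat_less_iff)
  ultimately have "res ` {..<q} = {..<q}"
    by (intro endo_inj_surj) auto
  moreover have "nat (k mod int q) \<in> {..<q}"
    using q_pos by (simp add: nat_less_iff)
  ultimately obtain j where j: "j < q" and "res j = nat (k mod int q)"
    by (metis imageE lessThan_iff)
  then have "k mod int q = base_param (j * p + i) mod int q"
    using q_pos by (simp add: res_def eq_nat_nat_iff)
  with j that show thesis
    by (simp add: mod_eq_dvd_iff)
qed

lemma strand_surj:
  assumes "i < p" and "(\<theta>, y) \<in> Phi (\<tau> i)"
  obtains j where "j < q" and "frac (strand (j * p + i) \<theta>) = y"
proof -
  obtain t where t: "(\<theta>, y) = (frac t, frac (lift i t))"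
    using qcurve_lift_lift[OF assms(1)] assms(2) by (rule qcurve_lift_memE)
  obtain j where j: "j < q" and "int q dvd \<lfloor>t\<rfloor> - base_param (j * p + i)"
    using base_param_residues[OF assms(1)] .
  then have "lift i (\<theta> + of_int (base_param (j * p + i)) + of_int (\<lfloor>t\<rfloor> - base_param (j * p + i)))
      - lift i (\<theta> + of_int (base_param (j * p + i))) \<in> \<int>"
    using qcurve_lift_diff_Ints_iff[OF qcurve_lift_lift[OF assms(1)] q_pos] by blast
  moreover have "\<theta> + of_int (base_param (j * p + i)) + of_int (\<lfloor>t\<rfloor> - base_param (j * p + i)) = t"
    using t by (simp add: frac_def)
  ultimately have "frac (lift i t) = frac (lift i (\<theta> + of_int (base_param (j * p + i))))"
    by (simp add: frac_eq_iff_diff_Ints)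
  then have "frac (strand (j * p + i) \<theta>) = y"
    using t index_combine[OF assms(1) j] by (simp add: frac_strand)
  with j that show thesis
    by blast
qed

definition lifted_fibre :: "real \<Rightarrow> real set" where
  "lifted_fibre \<theta> = {y. frac y \<in> fibre (\<Union>i<p. Phi i) \<theta>}"

lemma image_lifted_fibre:
  fixes f :: "real \<Rightarrow> real" and \<sigma> :: "nat \<Rightarrow> nat"
  assumes f: "\<And>y. f (y + 1) = f y + 1" and \<sigma>: "bij_betw \<sigma> {..<p} {..<p}"
    and maps: "\<And>i. i < p \<Longrightarrow> (\<lambda>y. frac (f y)) ` fibre (Phi i) \<theta> = fibre (Phi (\<sigma> i)) \<theta>'"
  shows "f ` lifted_fibre \<theta> = lifted_fibre \<theta>'"
proof
  show "f ` lifted_fibre \<theta> \<subseteq> lifted_fibre \<theta>'"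
  proof
    fix w assume "w \<in> f ` lifted_fibre \<theta>"
    then obtain y i where w: "w = f y" and i: "i < p" and "frac y \<in> fibre (Phi i) \<theta>"
      by (auto simp: lifted_fibre_def fibre_def)
    then have "frac (f (frac y)) \<in> fibre (Phi (\<sigma> i)) \<theta>'"
      using maps[OF i] by blast
    moreover have "\<sigma> i < p"
      using \<sigma> i by (auto simp: bij_betw_def)
    ultimately show "w \<in> lifted_fibre \<theta>'"
      using add_one_equivariant_frac[of f, OF f] by (auto simp: lifted_fibre_def fibre_def w)
  qed
  show "lifted_fibre \<theta>' \<subseteq> f ` lifted_fibre \<theta>"
  proof
    fix w assume "w \<in> lifted_fibre \<theta>'"
    then obtain i' where "i' < p" and "(\<theta>', frac w) \<in> Phi i'"
      by (auto simp: lifted_fibre_def fibre_def)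
    moreover obtain i where i: "i < p" and "\<sigma> i = i'"
      using \<sigma> \<open>i' < p\<close> unfolding bij_betw_def by (metis imageE lessThan_iff)
    ultimately have "frac w \<in> fibre (Phi (\<sigma> i)) \<theta>'"
      by (simp add: fibre_def)
    then have "frac w \<in> (\<lambda>y. frac (f y)) ` fibre (Phi i) \<theta>"
      using maps[OF i] by simp
    then obtain z where z: "(\<theta>, z) \<in> Phi i" and fz: "frac (f z) = frac w"
      by (elim imageE) (simp add: fibre_def)
    define z' where "z' = z + of_int (\<lfloor>w\<rfloor> - \<lfloor>f z\<rfloor>)"
    have "f z' = f z + of_int (\<lfloor>w\<rfloor> - \<lfloor>f z\<rfloor>)"
      unfolding z'_def by (rule add_one_equivariant_add_of_int[of f, OF f])
    also have "\<dots> = w"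
      using fz by (simp add: frac_def)
    finally have "f z' = w" .
    moreover have "frac z' = z"
      using Phi_frac[OF i z] by (simp only: z'_def frac_add_of_int_right)
    ultimately show "w \<in> f ` lifted_fibre \<theta>"
      using z i by (auto simp: lifted_fibre_def fibre_def)
  qed
qed

definition lifted_point :: "real \<Rightarrow> int \<Rightarrow> real" where
  "lifted_point \<theta> s = strand (nat (s mod int (p * q))) \<theta> + of_int (s div int (p * q))"

lemma nat_mod_period_less: "nat (s mod int (p * q)) < p * q"
  using p_pos q_pos by (simp add: nat_less_iff)

lemma lifted_point_mem: "(frac \<theta>, frac (lifted_point \<theta> s)) \<in> Phi (\<tau> (nat (s mod int p)))"
proof -
  define r where "r = nat (s mod int (p * q))"
  have "int (r mod p) = s mod int p"
    using p_pos q_pos by (simp add: r_def of_nat_mod mod_mod_cancel)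
  then have "r mod p = nat (s mod int p)"
    by linarith
  moreover have "(frac \<theta>, frac (strand r \<theta>)) \<in> Phi (\<tau> (r mod p))"
    using strand_mem nat_mod_period_less by (simp add: r_def)
  ultimately show ?thesis
    by (simp add: lifted_point_def r_def)
qed

lemma strict_mono_lifted_point: "strict_mono (lifted_point \<theta>)"
proof (rule strict_monoI)
  fix s t :: int assume "s < t"
  define P where "P = int (p * q)"
  have "0 < P"
    using p_pos q_pos by (simp add: P_def)
  have r: "nat (s mod P) < p * q" and r': "nat (t mod P) < p * q"
    using nat_mod_period_less by (simp_all add: P_def)
  have "s div P \<le> t div P"
    using \<open>s < t\<close> \<open>0 < P\<close> by (simp add: zdiv_mono1)
  then consider "s div P = t div P" | "s div P + 1 \<le> t div P"
    by linarith
  then show "lifted_point \<theta> s < lifted_point \<theta> t"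
  proof cases
    case 1
    then have "s = t div P * P + s mod P"
      using div_mult_mod_eq[of s P] by simp
    then have "s mod P < t mod P"
      using \<open>s < t\<close> div_mult_mod_eq[of t P] by linarith
    then have "nat (s mod P) < nat (t mod P)"
      using pos_mod_sign[OF \<open>0 < P\<close>, of s] by simp
    then show ?thesis
      using strand_less(1)[OF _ r'] 1 by (simp add: lifted_point_def P_def)
  next
    case 2
    then have "real_of_int (s div P) + 1 \<le> of_int (t div P)"
      by linarith
    then show ?thesis
      using strand_bounds(2)[OF r, of \<theta>] strand_bounds(1)[OF r', of \<theta>]
      by (simp add: lifted_point_def P_def)
  qed
qed

lemma range_lifted_point:
  assumes "\<theta> \<in> {0..<1}"
  shows "range (lifted_point \<theta>) = lifted_fibre \<theta>"
proof
  show "range (lifted_point \<theta>) \<subseteq> lifted_fibre \<theta>"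
  proof
    fix y assume "y \<in> range (lifted_point \<theta>)"
    then obtain s where y: "y = lifted_point \<theta> s"
      by blast
    have "\<tau> (nat (s mod int p)) < p"
      using p_pos by (intro \<tau>_less) (simp add: nat_less_iff)
    then show "y \<in> lifted_fibre \<theta>"
      using lifted_point_mem[of \<theta> s] assms unfolding y lifted_fibre_def fibre_def by auto
  qed
  show "lifted_fibre \<theta> \<subseteq> range (lifted_point \<theta>)"
  proof
    fix y assume "y \<in> lifted_fibre \<theta>"
    then obtain i' where "i' < p" and "(\<theta>, frac y) \<in> Phi i'"
      by (auto simp: lifted_fibre_def fibre_def)
    moreover obtain i where i: "i < p" and "\<tau> i = i'"
      using bij_\<tau> \<open>i' < p\<close> unfolding bij_betw_def by (metis imageE lessThan_iff)
    ultimately obtain j where j: "j < q" and fr: "frac (strand (j * p + i) \<theta>) = frac y"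
      using strand_surj by blast
    define r where "r = j * p + i"
    define k where "k = \<lfloor>y\<rfloor> - \<lfloor>strand r \<theta>\<rfloor>"
    have "r < p * q"
      using index_combine(1)[OF i j] by (simp add: r_def)
    then have r: "int r < int p * int q"
      by (metis of_nat_less_iff of_nat_mult)
    have "lifted_point \<theta> (k * int (p * q) + int r) = strand r \<theta> + of_int k"
      using r p_pos q_pos by (simp add: lifted_point_def div_mult_self3 div_pos_pos_trivial)
    also have "\<dots> = y"
      using fr by (simp add: k_def r_def frac_def)
    finally show "y \<in> range (lifted_point \<theta>)"
      by (metis rangeI)
  qed
qed

lemma fibre_map_rotates_labels:
  fixes f :: "real \<Rightarrow> real" and \<sigma> :: "nat \<Rightarrow> nat"
  assumes "strict_mono f" and f: "\<And>y. f (y + 1) = f y + 1"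
    and \<sigma>: "bij_betw \<sigma> {..<p} {..<p}"
    and maps: "\<And>i. i < p \<Longrightarrow> (\<lambda>y. frac (f y)) ` fibre (Phi i) \<theta> = fibre (Phi (\<sigma> i)) \<theta>'"
    and \<theta>: "\<theta> \<in> {0..<1}" and \<theta>': "\<theta>' \<in> {0..<1}"
  obtains c where "\<And>i. i < p \<Longrightarrow> \<sigma> (\<tau> i) = \<tau> ((c + i) mod p)"
proof -
  have "f ` range (lifted_point \<theta>) = range (lifted_point \<theta>')"
    using image_lifted_fibre[OF f \<sigma> maps] range_lifted_point \<theta> \<theta>' by simp
  then obtain c where c: "\<And>s. f (lifted_point \<theta> s) = lifted_point \<theta>' (s + c)"
    using strict_mono_image_enumeration_shift[OF strict_mono_lifted_point strict_mono_lifted_point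
        \<open>strict_mono f\<close>] by blast
  have "\<sigma> (\<tau> i) = \<tau> ((nat (c mod int p) + i) mod p)" if i: "i < p" for i
  proof -
    have "frac (lifted_point \<theta> (int i)) \<in> fibre (Phi (\<tau> i)) \<theta>"
      using lifted_point_mem[of \<theta> "int i"] \<theta> i by (simp add: fibre_def)
    then have "frac (f (frac (lifted_point \<theta> (int i)))) \<in> fibre (Phi (\<sigma> (\<tau> i))) \<theta>'"
      using maps[OF \<tau>_less[OF i]] by blast
    then have "(\<theta>', frac (lifted_point \<theta>' (int i + c))) \<in> Phi (\<sigma> (\<tau> i))"
      using add_one_equivariant_frac[of f, OF f] c by (simp add: fibre_def)
    moreover have "(\<theta>', frac (lifted_point \<theta>' (int i + c))) \<in> Phi (\<tau> (nat ((int i + c) mod int p)))"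
      using lifted_point_mem[of \<theta>' "int i + c"] \<theta>' by simp
    moreover have "int ((nat (c mod int p) + i) mod p) = (int i + c) mod int p"
      using p_pos by (simp add: of_nat_mod mod_add_right_eq add.commute)
    then have "nat ((int i + c) mod int p) = (nat (c mod int p) + i) mod p"
      by (metis nat_int)
    moreover have "\<sigma> (\<tau> i) < p"
      using \<sigma> \<tau>_less[OF i] by (auto simp: bij_betw_def)
    ultimately show ?thesis
      using Phi_unique \<tau>_less p_pos by (metis mod_less_divisor)
  qed
  with that show thesis
    by blast
qed

lemma rotation_by_jumping_number:
  assumes F: "T_hom_lift F" and \<sigma>: "bij_betw \<sigma> {..<p} {..<p}"
    and maps: "\<And>i. i < p \<Longrightarrow>
      (\<lambda>y. frac (F \<theta> y)) ` fibre (Phi i) \<theta> = fibre (Phi (\<sigma> i)) (frac (\<theta> + \<omega>))"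
    and \<theta>: "\<theta> \<in> {0..<1}" and "m < p"
    and \<psi>0: "qcurve_lift q (Phi (\<tau> 0)) \<psi>0" and \<psi>1: "qcurve_lift q (Phi (\<tau> m)) \<psi>1"
    and G: "is_T_lift \<omega> F G" and G_graph: "\<And>\<theta>. G (\<theta>, \<psi>0 \<theta>) = (\<theta> + \<omega>, \<psi>1 (\<theta> + \<omega>))"
    and "i < p"
  shows "\<sigma> (\<tau> i) = \<tau> ((m + i) mod p)"
proof -
  have "strict_mono (F \<theta>)" and "\<And>y. F \<theta> (y + 1) = F \<theta> y + 1"
    using F unfolding T_hom_lift_def by blast+
  moreover have "frac (\<theta> + \<omega>) \<in> {0..<1}"
    by (simp add: frac_lt_1)
  ultimately obtain c where rot: "\<And>i. i < p \<Longrightarrow> \<sigma> (\<tau> i) = \<tau> ((c + i) mod p)"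
    using fibre_map_rotates_labels[OF _ _ \<sigma> maps \<theta>] by blast
  obtain y where "(\<theta>, y) \<in> Phi (\<tau> 0)" and jump: "(frac (\<theta> + \<omega>), frac (F \<theta> y)) \<in> Phi (\<tau> m)"
    by (rule T_lift_maps_curve_point[OF G G_graph \<psi>0 \<psi>1 \<theta>])
  then have "(frac (\<theta> + \<omega>), frac (F \<theta> y)) \<in> Phi (\<sigma> (\<tau> 0))"
    using maps[OF \<tau>_less[OF p_pos]] by (auto simp: fibre_def)
  moreover have "\<sigma> (\<tau> 0) < p"
    using bij_betw_apply[OF \<sigma>] \<tau>_less[OF p_pos] by simp
  ultimately have "\<sigma> (\<tau> 0) = \<tau> m"
    using Phi_unique jump \<tau>_less \<open>m < p\<close> by blast
  then have "c mod p = m"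
    using rot[OF p_pos] \<tau>_eq_iff \<open>m < p\<close> p_pos by simp
  then show ?thesis
    using rot[OF \<open>i < p\<close>] mod_add_left_eq[of c p i] by simp
qed

end

lemma cont_pq_invariant_graphD:
  assumes "cont_pq_invariant_graph \<omega> F p q Phi"
  shows "0 < p" and "0 < q" and "\<And>i. i < p \<Longrightarrow> qcurve q (Phi i)"
    and "\<And>i i'. i < p \<Longrightarrow> i' < p \<Longrightarrow> i \<noteq> i' \<Longrightarrow> Phi i \<inter> Phi i' = {}"
  using assms unfolding cont_pq_invariant_graph_def by auto

lemma cont_pq_invariant_graph_good_fibre:
  assumes "cont_pq_invariant_graph \<omega> F p q Phi"
  obtains \<sigma> \<theta> where "bij_betw \<sigma> {..<p} {..<p}" and "\<forall>i<p. {(\<sigma> ^^ k) i | k. k < p} = {..<p}"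
    and "\<theta> \<in> {0..<1}"
    and "\<forall>i<p. (\<lambda>y. frac (F \<theta> y)) ` fibre (Phi i) \<theta> = fibre (Phi (\<sigma> i)) (frac (\<theta> + \<omega>))"
proof -
  obtain \<sigma> where \<sigma>: "bij_betw \<sigma> {..<p} {..<p}"
    and invariant: "\<forall>i<p. AE \<theta> in lborel. \<theta> \<in> {0..<1} \<longrightarrow>
      (\<lambda>x. snd (Tmap \<omega> F (\<theta>, x))) ` fibre (Phi i) \<theta> = fibre (Phi (\<sigma> i)) (frac (\<theta> + \<omega>))"
    and orbit: "\<forall>i<p. {(\<sigma> ^^ k) i | k. k < p} = {..<p}"
    using assms unfolding cont_pq_invariant_graph_def by (elim conjE exE) blast
  have "AE \<theta> in lborel. \<forall>i\<in>{..<p}. \<theta> \<in> {0..<1} \<longrightarrow>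
      (\<lambda>x. snd (Tmap \<omega> F (\<theta>, x))) ` fibre (Phi i) \<theta> = fibre (Phi (\<sigma> i)) (frac (\<theta> + \<omega>))"
    by (rule AE_finite_allI) (use invariant in auto)
  then have "AE \<theta> in lborel. \<theta> \<in> {0..<1} \<longrightarrow>
      (\<forall>i<p. (\<lambda>y. frac (F \<theta> y)) ` fibre (Phi i) \<theta> = fibre (Phi (\<sigma> i)) (frac (\<theta> + \<omega>)))"
    by (rule eventually_mono) (simp add: Tmap_def)
  then obtain \<theta> where "\<theta> \<in> {0..<1}"
    and "\<forall>i<p. (\<lambda>y. frac (F \<theta> y)) ` fibre (Phi i) \<theta> = fibre (Phi (\<sigma> i)) (frac (\<theta> + \<omega>))"
    by (rule AE_lborel_obtain_in_unit_interval)
  with \<sigma> orbit that show thesis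
    by blast
qed

lemma jumping_dataE:
  assumes "cont_pq_invariant_graph \<omega> F p q Phi" and "jumping_data \<omega> F p q Phi m n"
  obtains \<tau> x \<psi>0 \<psi>1 G where "labelled_qcurves p q Phi \<tau> x" and "m < p"
    and "qcurve_lift q (Phi (\<tau> 0)) \<psi>0" and "qcurve_lift q (Phi (\<tau> m)) \<psi>1"
    and "is_T_lift \<omega> F G" and "\<forall>\<theta>. G (\<theta>, \<psi>0 \<theta>) = (\<theta> + \<omega>, \<psi>1 (\<theta> + \<omega>))"
proof -
  obtain \<tau> x \<psi>0 \<psi>1 G where \<tau>: "bij_betw \<tau> {..<p} {..<p}"
    and x: "\<forall>i<p. \<forall>j<q. 0 \<le> x i j \<and> x i j < 1"
    and fibre_0: "\<forall>i<p. fibre (Phi (\<tau> i)) 0 = {x i j | j. j < q}"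
    and x_ordered: "\<forall>i<p. \<forall>j<q. \<forall>i'<p. \<forall>j'<q. j * p + i < j' * p + i' \<longrightarrow> x i j < x i' j'"
    and jump: "m < p" "qcurve_lift q (Phi (\<tau> 0)) \<psi>0" "qcurve_lift q (Phi (\<tau> m)) \<psi>1"
      "is_T_lift \<omega> F G" "\<forall>\<theta>. G (\<theta>, \<psi>0 \<theta>) = (\<theta> + \<omega>, \<psi>1 (\<theta> + \<omega>))"
    using assms(2) unfolding jumping_data_def by (elim exE conjE) blast
  have "labelled_qcurves p q Phi \<tau> x"
    using cont_pq_invariant_graphD[OF assms(1)] \<tau> x fibre_0 x_ordered by unfold_locales auto
  with jump that show thesis
    by blast
qed

theorem mainTheorem3:
  fixes \<omega> :: real and F :: "real \<Rightarrow> real \<Rightarrow> real" and p q m n :: nat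
    and Phi :: "nat \<Rightarrow> (real \<times> real) set"
  assumes "0 \<le> \<omega>" and "\<omega> < 1" and "\<omega> \<notin> \<rat>"
    and "T_hom_lift F"
    and "cont_pq_invariant_graph \<omega> F p q Phi"
    and "jumping_data \<omega> F p q Phi m n"
  shows "coprime m p \<and> coprime (m + n * p) p"
proof -
  obtain \<sigma> \<theta> where \<sigma>: "bij_betw \<sigma> {..<p} {..<p}" and orbit: "\<forall>i<p. {(\<sigma> ^^ k) i | k. k < p} = {..<p}"
    and \<theta>: "\<theta> \<in> {0..<1}"
    and maps: "\<forall>i<p. (\<lambda>y. frac (F \<theta> y)) ` fibre (Phi i) \<theta> = fibre (Phi (\<sigma> i)) (frac (\<theta> + \<omega>))"
    by (rule cont_pq_invariant_graph_good_fibre[OF assms(5)])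
  obtain \<tau> x \<psi>0 \<psi>1 G where "labelled_qcurves p q Phi \<tau> x" and "m < p"
    and \<psi>0: "qcurve_lift q (Phi (\<tau> 0)) \<psi>0" and \<psi>1: "qcurve_lift q (Phi (\<tau> m)) \<psi>1"
    and G: "is_T_lift \<omega> F G" and G_graph: "\<forall>\<theta>. G (\<theta>, \<psi>0 \<theta>) = (\<theta> + \<omega>, \<psi>1 (\<theta> + \<omega>))"
    by (rule jumping_dataE[OF assms(5,6)])
  interpret labelled_qcurves p q Phi \<tau> x
    by fact
  have "\<sigma> (\<tau> i) = \<tau> ((m + i) mod p)" if "i < p" for i
    by (rule rotation_by_jumping_number[OF assms(4) \<sigma> maps[rule_format] \<theta> \<open>m < p\<close> \<psi>0 \<psi>1 G
        G_graph[rule_format] that])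
  then have "coprime m p"
    using coprime_if_conj_rotation_transitive p_pos bij_\<tau> orbit \<tau>_less by blast
  then show ?thesis
    using p_pos coprime_mod_left_iff[of p "m + n * p"] by simp
qed

end
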